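(* Let $X=(X_n)_{n\in\mathbb{Z}}$ be a stationary and ergodic sequence of integer-valued random variables. Then exactly one of the following holds: (1) the record graph of $X$ is almost surely connected; or (2) almost surely every connected component of the record graph of $X$ is finite.
   Context: For a sequence $x=(x_n)_{n\in\mathbb{Z}}$, the record map is $R_x(i)=\inf\{n>i: \sum_{l=i}^{n-1}x_l\ge0\}$ if this set is nonempty, and $R_x(i)=i$ otherwise. The record graph has vertex set $\mathbb{Z}$ and a directed edge $i\to R_x(i)$ whenever $R_x(i)\ne i$; connectivity and components are understood in the undirected sense. *)

theory Defs
  imports "HOL-Probability.Probability"
begin

definition record_set :: "(int \<Rightarrow> int) \<Rightarrow> int \<Rightarrow> int set" where
  "record_set x i = {n. n > i \<and> (\<Sum>l\<in>{i..<n}. x l) \<ge> 0}"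

definition record_map :: "(int \<Rightarrow> int) \<Rightarrow> int \<Rightarrow> int" where
  "record_map x i = (if record_set x i \<noteq> {} then Inf (record_set x i) else i)"

definition record_edges :: "(int \<Rightarrow> int) \<Rightarrow> (int \<times> int) set" where
  "record_edges x = {(i, record_map x i) | i. record_map x i \<noteq> i}"

definition record_conn :: "(int \<Rightarrow> int) \<Rightarrow> (int \<times> int) set" where
  "record_conn x = (record_edges x \<union> (record_edges x)\<inverse>)\<^sup>*"

definition record_graph_connected :: "(int \<Rightarrow> int) \<Rightarrow> bool" where
  "record_graph_connected x \<longleftrightarrow> (\<forall>i j. (i, j) \<in> record_conn x)"

definition record_component :: "(int \<Rightarrow> int) \<Rightarrow> int \<Rightarrow> int set" where
  "record_component x i = {j. (i, j) \<in> record_conn x}"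

definition record_components_finite :: "(int \<Rightarrow> int) \<Rightarrow> bool" where
  "record_components_finite x \<longleftrightarrow> (\<forall>i. finite (record_component x i))"

abbreviation seq_space :: "(int \<Rightarrow> int) measure" where
  "seq_space \<equiv> PiM UNIV (\<lambda>_. count_space UNIV)"

definition shift :: "(int \<Rightarrow> int) \<Rightarrow> (int \<Rightarrow> int)" where
  "shift x = (\<lambda>n. x (n + 1))"

definition stationary :: "'a measure \<Rightarrow> (int \<Rightarrow> 'a \<Rightarrow> int) \<Rightarrow> bool" where
  "stationary M X \<longleftrightarrow>
     distr M seq_space (\<lambda>\<omega> n. X (n + 1) \<omega>) = distr M seq_space (\<lambda>\<omega> n. X n \<omega>)"

definition ergodic :: "'a measure \<Rightarrow> (int \<Rightarrow> 'a \<Rightarrow> int) \<Rightarrow> bool" where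
  "ergodic M X \<longleftrightarrow>
     (\<forall>A \<in> sets seq_space. shift -` A = A \<longrightarrow>
        measure M {\<omega> \<in> space M. (\<lambda>n. X n \<omega>) \<in> A} \<in> {0, 1})"

end

theory Submission
  imports Defs
begin

(* Call k a cut of x when R_x(u) <= k for every u <= k, i.e. no edge of the record graph passes
   over the gap between k and k + 1. Every vertex between i and R_x(i) is joined to R_x(i), so
   the graph is connected when there is no cut, while every component lies between two cuts.
   The existence of a cut is a shift-invariant event, so by ergodicity it has probability 0 or 1.
   In the second case the cuts form a shift-covariant random set of integers: the events
   "n is its largest element" are disjoint shifts of one another, hence have equal and therefore
   zero probability, and likewise for smallest elements. So the cuts are almost surely unbounded
   in both directions and all components are finite. The two alternatives exclude each other
   because the vertex set is infinite. *)

lemma Inf_int_mem: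
  fixes S :: "int set"
  assumes "n \<in> S" and "bdd_below S"
  shows "Inf S \<in> S"
proof -
  obtain b where b: "\<And>m. m \<in> S \<Longrightarrow> b \<le> m"
    using assms(2) by (auto simp: bdd_below_def)
  define F where "F = S \<inter> {..n}"
  have "finite F"
    unfolding F_def by (rule finite_subset[of _ "{b..n}"]) (auto dest: b)
  have "n \<in> F"
    using assms(1) by (simp add: F_def)
  have "Min F \<in> F"
    using \<open>finite F\<close> \<open>n \<in> F\<close> by (intro Min_in) auto
  moreover have "\<And>m. m \<in> F \<Longrightarrow> Min F \<le> m"
    using \<open>finite F\<close> by (rule Min_le)
  ultimately have "Min F \<in> S" "\<And>m. m \<in> S \<Longrightarrow> Min F \<le> m"
    using \<open>n \<in> F\<close> by (fastforce simp: F_def)+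
  then show ?thesis
    using cInf_eq_minimum by metis
qed

lemma sum_int_interval_split:
  fixes f :: "int \<Rightarrow> 'a::comm_monoid_add"
  assumes "i \<le> j" "j \<le> n"
  shows "(\<Sum>l\<in>{i..<n}. f l) = (\<Sum>l\<in>{i..<j}. f l) + (\<Sum>l\<in>{j..<n}. f l)"
  using assms by (simp add: sum.union_disjoint[symmetric] ivl_disj_un_two(3))

lemma int_set_unbounded_above:
  fixes S :: "int set"
  assumes "k \<in> S" and no_max: "\<And>m. m \<in> S \<Longrightarrow> \<exists>m'\<in>S. m < m'"
  shows "\<exists>m\<in>S. n < m"
proof (cases "n < k")
  case True
  then show ?thesis using assms(1) by blast
next
  case False
  then have "k \<le> n" by simp
  then show ?thesis
  proof (induction n rule: int_ge_induct)
    case base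
    then show ?case using no_max[OF assms(1)] .
  next
    case (step n)
    then obtain m where "m \<in> S" "n < m" by blast
    then show ?case
      using no_max[of m] by (cases "m = n + 1") force+
  qed
qed

lemma int_set_unbounded_below:
  fixes S :: "int set"
  assumes "k \<in> S" and no_min: "\<And>m. m \<in> S \<Longrightarrow> \<exists>m'\<in>S. m' < m"
  shows "\<exists>m\<in>S. m < n"
proof (cases "k < n")
  case True
  then show ?thesis using assms(1) by blast
next
  case False
  then have "n \<le> k" by simp
  then show ?thesis
  proof (induction n rule: int_le_induct)
    case base
    then show ?case using no_min[OF assms(1)] .
  next
    case (step n)
    then obtain m where "m \<in> S" "m < n" by blast
    then show ?case
      using no_min[of m] by (cases "m = n - 1") force+
  qed
qed

lemma record_set_bdd_below: "bdd_below (record_set x i)"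
  by (auto simp: record_set_def bdd_below_def intro!: exI[of _ i])

lemma record_map_mem: "record_set x i \<noteq> {} \<Longrightarrow> record_map x i \<in> record_set x i"
  using Inf_int_mem[OF _ record_set_bdd_below] by (auto simp: record_map_def)

lemma record_map_le: "n \<in> record_set x i \<Longrightarrow> record_map x i \<le> n"
  using cInf_lower[OF _ record_set_bdd_below] by (auto simp: record_map_def)

lemma record_map_ge: "i \<le> record_map x i"
  using record_map_mem[of x i] by (cases "record_set x i = {}") (auto simp: record_map_def record_set_def)

lemma record_map_nested:
  assumes "i < j" "j < record_map x i"
  shows "j < record_map x j" "record_map x j \<le> record_map x i"
proof -
  have "record_set x i \<noteq> {}"
    using assms by (auto simp: record_map_def)
  then have R: "record_map x i \<in> record_set x i"
    by (rule record_map_mem)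
  have "j \<notin> record_set x i"
  proof
    assume "j \<in> record_set x i"
    then have "record_map x i \<le> j" by (rule record_map_le)
    with assms(2) show False by simp
  qed
  then have "(\<Sum>l\<in>{i..<j}. x l) < 0"
    using assms(1) by (auto simp: record_set_def)
  moreover have "(\<Sum>l\<in>{i..<record_map x i}. x l) =
      (\<Sum>l\<in>{i..<j}. x l) + (\<Sum>l\<in>{j..<record_map x i}. x l)"
    using assms by (intro sum_int_interval_split) auto
  ultimately have Rj: "record_map x i \<in> record_set x j"
    using R assms(2) by (auto simp: record_set_def)
  then show "record_map x j \<le> record_map x i"
    by (rule record_map_le)
  show "j < record_map x j"
    using record_map_mem[of x j] Rj by (auto simp: record_set_def)
qed

lemma record_conn_refl: "(i, i) \<in> record_conn x"
  by (simp add: record_conn_def)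

lemma record_conn_sym: "(i, j) \<in> record_conn x \<Longrightarrow> (j, i) \<in> record_conn x"
  unfolding record_conn_def
  by (metis converse_Un converse_converse converse_iff rtrancl_converseI sup_commute)

lemma record_conn_trans:
  "(i, j) \<in> record_conn x \<Longrightarrow> (j, k) \<in> record_conn x \<Longrightarrow> (i, k) \<in> record_conn x"
  unfolding record_conn_def by (rule rtrancl_trans)

lemma record_conn_record_map: "(i, record_map x i) \<in> record_conn x"
  by (cases "record_map x i = i") (auto simp: record_conn_def record_edges_def)

lemma record_conn_record_map_interval:
  assumes "i \<le> j" "j \<le> record_map x i"
  shows "(j, record_map x i) \<in> record_conn x"
  using assms
proof (induction "nat (record_map x i - j)" arbitrary: j rule: less_induct)
  case less
  consider "j = i" | "j = record_map x i" | "i < j" "j < record_map x i"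
    using less.prems by linarith
  then show ?case
  proof cases
    case 1
    then show ?thesis by (simp add: record_conn_record_map)
  next
    case 2
    then show ?thesis by (simp add: record_conn_refl)
  next
    case 3
    note nested = record_map_nested[OF 3]
    have "(record_map x j, record_map x i) \<in> record_conn x"
      using less.hyps[of "record_map x j"] nested 3 by auto
    then show ?thesis
      using record_conn_record_map record_conn_trans by blast
  qed
qed

definition record_cut :: "(int \<Rightarrow> int) \<Rightarrow> int \<Rightarrow> bool" where
  "record_cut x k \<longleftrightarrow> (\<forall>u\<le>k. record_map x u \<le> k)"

lemma record_graph_connected_if_no_cut:
  assumes "\<And>k. \<not> record_cut x k"
  shows "record_graph_connected x"
proof -
  have succ: "(k, k + 1) \<in> record_conn x" for k
  proof -
    obtain u where "u \<le> k" "k < record_map x u"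
      using assms[of k] by (auto simp: record_cut_def not_le)
    then have "(k, record_map x u) \<in> record_conn x" "(k + 1, record_map x u) \<in> record_conn x"
      by (auto intro: record_conn_record_map_interval)
    then show ?thesis
      using record_conn_sym record_conn_trans by blast
  qed
  have up: "(i, j) \<in> record_conn x" if "i \<le> j" for i j
    using that
  proof (induction j rule: int_ge_induct)
    case base
    then show ?case by (rule record_conn_refl)
  next
    case (step j)
    then show ?case using record_conn_trans succ by blast
  qed
  show ?thesis
    unfolding record_graph_connected_def
  proof (intro allI)
    fix i j
    show "(i, j) \<in> record_conn x"
      using up[of i j] up[of j i] record_conn_sym by (cases "i \<le> j") auto
  qed
qed

lemma record_component_between_cuts:
  assumes a: "record_cut x a" and b: "record_cut x b" and "a < i" "i \<le> b"
  shows "record_component x i \<subseteq> {a<..b}"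
proof -
  have "a < v \<and> v \<le> b" if "(i, v) \<in> record_conn x" for v
    using that unfolding record_conn_def
  proof (induction rule: rtrancl_induct)
    case base
    then show ?case using assms(3,4) by simp
  next
    case (step y z)
    then have y: "a < y" "y \<le> b" by simp_all
    from step(2) consider "(y, z) \<in> record_edges x" | "(z, y) \<in> record_edges x"
      by blast
    then show ?case
    proof cases
      case 1
      then have "z = record_map x y" "z \<noteq> y"
        by (auto simp: record_edges_def)
      moreover have "record_map x y \<le> b"
        using b y(2) by (simp add: record_cut_def)
      ultimately show ?thesis
        using y record_map_ge[of y x] by linarith
    next
      case 2
      then have "y = record_map x z" "z \<noteq> y"
        by (auto simp: record_edges_def)
      moreover have "\<not> z \<le> a"
      proof
        assume "z \<le> a"
        then have "record_map x z \<le> a"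
          using a by (simp add: record_cut_def)
        with y(1) \<open>y = record_map x z\<close> show False
          by linarith
      qed
      ultimately show ?thesis
        using y record_map_ge[of z x] by linarith
    qed
  qed
  then show ?thesis
    by (auto simp: record_component_def)
qed

lemma record_components_finite_if_cuts_unbounded:
  assumes "\<And>n. \<exists>k. n < k \<and> record_cut x k" "\<And>n. \<exists>k. k < n \<and> record_cut x k"
  shows "record_components_finite x"
  unfolding record_components_finite_def
proof
  fix i
  obtain a b where "record_cut x a" "a < i" "record_cut x b" "i \<le> b"
    using assms(1)[of "i - 1"] assms(2)[of i] by force
  then have "record_component x i \<subseteq> {a<..b}"
    by (intro record_component_between_cuts)
  then show "finite (record_component x i)"
    using finite_subset by blast
qed

lemma not_record_components_finite_if_connected:
  assumes "record_graph_connected x"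
  shows "\<not> record_components_finite x"
proof -
  have "record_component x 0 = UNIV"
    using assms by (auto simp: record_component_def record_graph_connected_def)
  then show ?thesis
    unfolding record_components_finite_def using infinite_UNIV_int by metis
qed

lemma record_set_shift: "n \<in> record_set (shift x) i \<longleftrightarrow> n + 1 \<in> record_set x (i + 1)"
proof -
  have "(\<Sum>l\<in>{i..<n}. x (l + 1)) = (\<Sum>l\<in>{i + 1..<n + 1}. x l)"
    by (rule sum.reindex_bij_witness[where i="\<lambda>l. l - 1" and j="\<lambda>l. l + 1"]) auto
  then show ?thesis
    by (auto simp: record_set_def shift_def)
qed

lemma record_map_shift: "record_map (shift x) i = record_map x (i + 1) - 1"
proof (cases "record_set x (i + 1) = {}")
  case True
  then have "record_set (shift x) i = {}"
    using record_set_shift by blast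
  with True show ?thesis
    by (simp add: record_map_def)
next
  case False
  then have mem: "record_map x (i + 1) - 1 \<in> record_set (shift x) i"
    using record_map_mem record_set_shift by simp
  then have "record_map (shift x) i + 1 \<in> record_set x (i + 1)"
    using record_map_mem record_set_shift by blast
  then have "record_map x (i + 1) \<le> record_map (shift x) i + 1"
    by (rule record_map_le)
  then show ?thesis
    using record_map_le[OF mem] by simp
qed

lemma record_cut_shift: "record_cut (shift x) k \<longleftrightarrow> record_cut x (k + 1)"
  unfolding record_cut_def record_map_shift
  by (metis add_le_cancel_right diff_add_cancel diff_le_eq)

lemma space_seq_space: "space seq_space = UNIV"
  by (simp add: space_PiM)

lemma measurable_sample_paths:
  "(\<And>n. X n \<in> measurable M (count_space UNIV)) \<Longrightarrow> (\<lambda>\<omega> n. X n \<omega>) \<in> measurable M seq_space"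
  by (rule measurable_PiM_single') auto

lemma measurable_shift [measurable]: "shift \<in> measurable seq_space seq_space"
  unfolding shift_def by (rule measurable_PiM_single') auto

lemma measurable_partial_sum [measurable]:
  "(\<lambda>x. \<Sum>l\<in>I. x l) \<in> measurable seq_space (count_space (UNIV :: int set))"
proof (cases "finite I")
  case True
  then show ?thesis
  proof (induction I rule: finite_induct)
    case empty
    then show ?case by simp
  next
    case (insert a F)
    have "(\<lambda>x. v + (\<Sum>l\<in>F. x l)) \<in> measurable seq_space (count_space UNIV)" for v :: int
      using measurable_compose[OF insert.IH, of "\<lambda>s. v + s"] by simp
    then have "(\<lambda>x. x a + (\<Sum>l\<in>F. x l)) \<in> measurable seq_space (count_space UNIV)"
      by (rule measurable_compose_countable[where f="\<lambda>v x. v + (\<Sum>l\<in>F. x l)"]) simp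
    then show ?case
      using insert by simp
  qed
qed simp

lemma record_map_le_iff:
  assumes "u \<le> k"
  shows "record_map x u \<le> k \<longleftrightarrow>
    (\<forall>n>u. (\<Sum>l\<in>{u..<n}. x l) < 0) \<or> (\<exists>n>u. n \<le> k \<and> 0 \<le> (\<Sum>l\<in>{u..<n}. x l))"
proof (cases "record_set x u = {}")
  case True
  then show ?thesis
    using assms by (auto simp: record_map_def record_set_def not_le)
next
  case False
  then show ?thesis
    using record_map_mem[OF False] record_map_le[of _ x u] by (force simp: record_set_def not_le)
qed

lemma measurable_record_cut [measurable]: "Measurable.pred seq_space (\<lambda>x. record_cut x k)"
  unfolding record_cut_def by (simp add: record_map_le_iff cong: imp_cong) measurable

lemma (in prob_space) prob_disjoint_translates_eq_0:
  fixes D :: "int \<Rightarrow> 'a set"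
  assumes "disjoint_family D" "\<And>n. D n \<in> events" "\<And>n. prob (D (n + 1)) = prob (D n)"
  shows "prob (D n) = 0"
proof -
  define c where "c = prob (D 0)"
  have const: "prob (D m) = c" for m
  proof (induction m rule: int_induct[where k=0])
    case base
    then show ?case by (simp add: c_def)
  next
    case (step1 i)
    then show ?case using assms(3)[of i] by simp
  next
    case (step2 i)
    then show ?case using assms(3)[of "i - 1"] by simp
  qed
  have bound: "real N * c \<le> 1" for N
  proof -
    have "real N * c = (\<Sum>k<N. prob (D (int k)))"
      using const by simp
    also have "\<dots> = prob (\<Union>k<N. D (int k))"
      using assms(1,2) by (intro finite_measure_finite_Union[symmetric]) (auto simp: disjoint_family_on_def)
    also have "\<dots> \<le> 1"
      by (rule prob_le_1)
    finally show ?thesis .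
  qed
  have "c \<le> 0"
  proof (rule ccontr)
    assume "\<not> c \<le> 0"
    then obtain N where "1 < real N * c"
      using ex_less_of_nat_mult[of c 1] by auto
    with bound[of N] show False by simp
  qed
  then show ?thesis
    using const[of n] measure_nonneg[of M "D n"] by simp
qed

lemma (in prob_space) not_AE_record_graph_connected_and_components_finite:
  "\<not> ((AE \<omega> in M. record_graph_connected (f \<omega>)) \<and> (AE \<omega> in M. record_components_finite (f \<omega>)))"
proof
  assume both: "(AE \<omega> in M. record_graph_connected (f \<omega>)) \<and>
    (AE \<omega> in M. record_components_finite (f \<omega>))"
  have "AE \<omega> in M. False"
    using both[THEN conjunct1] both[THEN conjunct2]
    by eventually_elim (use not_record_components_finite_if_connected in blast)
  then show False
    by simp
qed

locale shift_invariant_prob = prob_space P for P :: "(int \<Rightarrow> int) measure" +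
  assumes sets_P: "sets P = sets seq_space"
    and distr_shift: "distr P seq_space shift = P"
begin

lemma space_P: "space P = UNIV"
  using sets_eq_imp_space_eq[OF sets_P] by (simp add: space_seq_space)

lemma prob_shift_vimage:
  assumes "A \<in> sets seq_space"
  shows "prob (shift -` A) = prob A"
proof -
  have "prob A = measure (distr P seq_space shift) A"
    using distr_shift by simp
  also have "\<dots> = prob (shift -` A \<inter> space P)"
    using assms by (intro measure_distr) (simp_all add: measurable_cong_sets[OF sets_P refl])
  finally show ?thesis
    by (simp add: space_P)
qed

lemma AE_not_in_disjoint_translates:
  fixes D :: "int \<Rightarrow> (int \<Rightarrow> int) set"
  assumes "disjoint_family D" "\<And>n. D n \<in> sets seq_space" "\<And>n. shift -` D n = D (n + 1)"
  shows "AE x in P. \<forall>n. x \<notin> D n"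
proof -
  have "prob (D n) = 0" for n
  proof (rule prob_disjoint_translates_eq_0)
    show "disjoint_family D" by fact
    show "D n \<in> events" for n
      using assms(2) sets_P by simp
    show "prob (D (n + 1)) = prob (D n)" for n
      using prob_shift_vimage[OF assms(2)] assms(3) by simp
  qed
  then have "AE x in P. x \<notin> D n" for n
    using assms(2) sets_P by (intro AE_not_in null_setsI) (auto simp: emeasure_eq_measure)
  then show ?thesis
    by (simp add: AE_all_countable)
qed

lemma AE_no_extremal_element:
  fixes Q :: "(int \<Rightarrow> int) \<Rightarrow> int \<Rightarrow> bool" and R :: "int \<Rightarrow> int \<Rightarrow> bool"
  assumes [measurable]: "\<And>k. Measurable.pred seq_space (\<lambda>x. Q x k)"
    and Q_shift: "\<And>x k. Q (shift x) k \<longleftrightarrow> Q x (k + 1)"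
    and R_total: "\<And>n m. n \<noteq> m \<Longrightarrow> R n m \<or> R m n"
    and R_shift: "\<And>n k. R (n + 1) k \<longleftrightarrow> R n (k - 1)"
  shows "AE x in P. \<forall>n. Q x n \<longrightarrow> (\<exists>k. R n k \<and> Q x k)"
proof -
  define extremal_at where "extremal_at n = {x. Q x n \<and> (\<forall>k. R n k \<longrightarrow> \<not> Q x k)}" for n
  have "AE x in P. \<forall>n. x \<notin> extremal_at n"
  proof (rule AE_not_in_disjoint_translates)
    show "disjoint_family extremal_at"
      using R_total by (fastforce simp: disjoint_family_on_def extremal_at_def)
    have "{x \<in> space seq_space. Q x n \<and> (\<forall>k. R n k \<longrightarrow> \<not> Q x k)} \<in> sets seq_space" for n
      by measurable
    then show "extremal_at n \<in> sets seq_space" for n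
      by (simp add: extremal_at_def space_seq_space)
    have "(\<forall>k. R n k \<longrightarrow> \<not> Q x (k + 1)) \<longleftrightarrow> (\<forall>k. R (n + 1) k \<longrightarrow> \<not> Q x k)" for x n
      unfolding R_shift by (metis add_diff_cancel_right' diff_add_cancel)
    then show "shift -` extremal_at n = extremal_at (n + 1)" for n
      by (auto simp: extremal_at_def Q_shift)
  qed
  then show ?thesis
    by eventually_elim (auto simp: extremal_at_def)
qed

lemma AE_shift_covariant_set_unbounded:
  fixes Q :: "(int \<Rightarrow> int) \<Rightarrow> int \<Rightarrow> bool"
  assumes "\<And>k. Measurable.pred seq_space (\<lambda>x. Q x k)"
    and "\<And>x k. Q (shift x) k \<longleftrightarrow> Q x (k + 1)"
  shows "AE x in P. (\<exists>k. Q x k) \<longrightarrow> (\<forall>n. \<exists>k. n < k \<and> Q x k) \<and> (\<forall>n. \<exists>k. k < n \<and> Q x k)"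
proof -
  have "AE x in P. \<forall>n. Q x n \<longrightarrow> (\<exists>k. n < k \<and> Q x k)"
    using assms by (rule AE_no_extremal_element) auto
  moreover have "AE x in P. \<forall>n. Q x n \<longrightarrow> (\<exists>k. k < n \<and> Q x k)"
    using assms by (rule AE_no_extremal_element[where R="\<lambda>n k. k < n"]) auto
  ultimately show ?thesis
  proof eventually_elim
    case (elim x)
    show ?case
    proof
      assume "\<exists>k. Q x k"
      then obtain k where "k \<in> {k. Q x k}"
        by blast
      from int_set_unbounded_above[OF this] int_set_unbounded_below[OF this]
      show "(\<forall>n. \<exists>k. n < k \<and> Q x k) \<and> (\<forall>n. \<exists>k. k < n \<and> Q x k)"
        using elim by blast
    qed
  qed
qed

end

locale ergodic_shift_prob = shift_invariant_prob +
  assumes invariant_events_trivial: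
    "\<And>A. A \<in> sets seq_space \<Longrightarrow> shift -` A = A \<Longrightarrow> prob A = 0 \<or> prob A = 1"
begin

lemma AE_record_graph_connected_or_components_finite:
  "(AE x in P. record_graph_connected x) \<or> (AE x in P. record_components_finite x)"
proof -
  define C where "C = {x. \<exists>k. record_cut x k}"
  have "{x \<in> space seq_space. \<exists>k. record_cut x k} \<in> sets seq_space"
    by measurable
  then have C: "C \<in> sets seq_space"
    by (simp add: C_def space_seq_space)
  have "(\<exists>k. record_cut (shift x) k) \<longleftrightarrow> (\<exists>k. record_cut x k)" for x
    unfolding record_cut_shift by (metis diff_add_cancel)
  then have "shift -` C = C"
    by (simp add: C_def vimage_def)
  with C consider "prob C = 0" | "prob C = 1"
    using invariant_events_trivial by blast
  then show ?thesis
  proof cases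
    case 1
    then have "AE x in P. x \<notin> C"
      using C sets_P by (intro AE_not_in null_setsI) (auto simp: emeasure_eq_measure)
    then have "AE x in P. record_graph_connected x"
      by eventually_elim (auto simp: C_def intro: record_graph_connected_if_no_cut)
    then show ?thesis ..
  next
    case 2
    then have "AE x in P. x \<in> C"
      by (rule AE_prob_1)
    moreover have "AE x in P. (\<exists>k. record_cut x k) \<longrightarrow>
        (\<forall>n. \<exists>k. n < k \<and> record_cut x k) \<and> (\<forall>n. \<exists>k. k < n \<and> record_cut x k)"
      by (rule AE_shift_covariant_set_unbounded) (simp_all add: record_cut_shift)
    ultimately have "AE x in P. record_components_finite x"
      by eventually_elim (auto simp: C_def intro: record_components_finite_if_cuts_unbounded)
    then show ?thesis ..
  qed
qed

end

lemma ergodic_shift_prob_distr: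
  fixes M :: "'a measure" and X :: "int \<Rightarrow> 'a \<Rightarrow> int"
  assumes "prob_space M" "\<And>n. X n \<in> measurable M (count_space UNIV)"
    and "stationary M X" "ergodic M X"
  shows "ergodic_shift_prob (distr M seq_space (\<lambda>\<omega> n. X n \<omega>))"
proof -
  interpret M: prob_space M by fact
  have X: "(\<lambda>\<omega> n. X n \<omega>) \<in> measurable M seq_space"
    using assms(2) by (rule measurable_sample_paths)
  define P where "P = distr M seq_space (\<lambda>\<omega> n. X n \<omega>)"
  have "distr P seq_space shift = distr M seq_space (shift \<circ> (\<lambda>\<omega> n. X n \<omega>))"
    unfolding P_def by (rule distr_distr[OF measurable_shift X])
  also have "shift \<circ> (\<lambda>\<omega> n. X n \<omega>) = (\<lambda>\<omega> n. X (n + 1) \<omega>)"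
    by (auto simp: shift_def fun_eq_iff)
  finally have "distr P seq_space shift = P"
    using assms(3) by (simp add: stationary_def P_def)
  moreover have "prob_space P"
    unfolding P_def by (rule M.prob_space_distr[OF X])
  moreover have "sets P = sets seq_space"
    by (simp add: P_def)
  moreover have "measure P A = 0 \<or> measure P A = 1"
    if "A \<in> sets seq_space" "shift -` A = A" for A
  proof -
    have "measure P A = measure M {\<omega> \<in> space M. (\<lambda>n. X n \<omega>) \<in> A}"
      unfolding P_def using that(1) by (simp add: measure_distr[OF X] vimage_def Int_def conj_commute)
    then show ?thesis
      using assms(4) that unfolding ergodic_def by auto
  qed
  ultimately have "ergodic_shift_prob P"
    by (intro ergodic_shift_prob.intro shift_invariant_prob.intro
        shift_invariant_prob_axioms.intro ergodic_shift_prob_axioms.intro)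
  then show ?thesis
    by (simp add: P_def)
qed

theorem corollary3p5:
  fixes M :: "'a measure" and X :: "int \<Rightarrow> 'a \<Rightarrow> int"
  assumes "prob_space M"
    and "\<And>n. X n \<in> measurable M (count_space UNIV)"
    and "stationary M X"
    and "ergodic M X"
  shows "((AE \<omega> in M. record_graph_connected (\<lambda>n. X n \<omega>)) \<and>
            \<not> (AE \<omega> in M. record_components_finite (\<lambda>n. X n \<omega>)))
       \<or> (\<not> (AE \<omega> in M. record_graph_connected (\<lambda>n. X n \<omega>)) \<and>
            (AE \<omega> in M. record_components_finite (\<lambda>n. X n \<omega>)))"
proof -
  interpret M: prob_space M by fact
  interpret P: ergodic_shift_prob "distr M seq_space (\<lambda>\<omega> n. X n \<omega>)"
    using assms by (rule ergodic_shift_prob_distr)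
  have "(\<lambda>\<omega> n. X n \<omega>) \<in> measurable M seq_space"
    using assms(2) by (rule measurable_sample_paths)
  then have "(AE \<omega> in M. record_graph_connected (\<lambda>n. X n \<omega>)) \<or>
      (AE \<omega> in M. record_components_finite (\<lambda>n. X n \<omega>))"
    using P.AE_record_graph_connected_or_components_finite by (blast dest: AE_distrD)
  moreover have "\<not> ((AE \<omega> in M. record_graph_connected (\<lambda>n. X n \<omega>)) \<and>
      (AE \<omega> in M. record_components_finite (\<lambda>n. X n \<omega>)))"
    by (rule M.not_AE_record_graph_connected_and_components_finite)
  ultimately show ?thesis
    by blast
qed

end
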